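(* Let $\alpha>1$, let $\Omega\subset\mathbb{D}$ be a measurable set, and let $F\in A^1_\alpha(\mathbb{D})$. Then for every $0<R<1$, $$\|F\cdot\chi_\Omega\|_{A^1_\alpha(\mathbb{D})}\le \frac{2\,\rho_{\mathbb{D}}(\Omega,R)}{C^\alpha(R)}\,\|F\|_{A^1_\alpha(\mathbb{D})},$$ where $C^\alpha(R)=\frac{1}{\alpha-1}\left(1-(1-R^2)^{\alpha-1}\right)$ and $\rho_{\mathbb{D}}(\Omega,R)=\sup_{z\in\mathbb{D}}|\Omega\cap B_{\varrho_{\mathbb{D}}}(z,R)|_{\mathbb{D}}$.
   Context: $\mathbb{D}$ is the open unit disc in $\mathbb{C}$ and $dz$ denotes Lebesgue area measure. The pseudohyperbolic metric is $\varrho_{\mathbb{D}}(z_1,z_2)=\left|\frac{z_1-z_2}{1-z_1\overline{z_2}}\right|$, and for $z\in\mathbb{D}$, $0<R<1$, the pseudohyperbolic ball is $B_{\varrho_{\mathbb{D}}}(z,R)=\{w\in\mathbb{D}:\varrho_{\mathbb{D}}(w,z)<R\}$. The hyperbolic measure of a measurable set $E\subset\mathbb{D}$ is $|E|_{\mathbb{D}}=\int_E(1-|z|^2)^{-2}\,dz$. For $1\le p<\infty$, the weighted Bergman space $A^p_\alpha(\mathbb{D})$ is the space of analytic functions $F$ on $\mathbb{D}$ with $$\|F\|^p_{A^p_\alpha(\mathbb{D})}=\frac{1}{\pi}\int_{\mathbb{D}}|F(z)|^p(1-|z|^2)^{\alpha-2}\,dz<\infty,$$ and for a (not necessarily analytic)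 measurable function $G$ on $\mathbb{D}$ the same expression defines $\|G\|_{A^p_\alpha(\mathbb{D})}$; in particular $\|F\chi_\Omega\|_{A^1_\alpha(\mathbb{D})}=\frac1\pi\int_\Omega|F(z)|(1-|z|^2)^{\alpha-2}dz$. *)

theory Defs
  imports "HOL-Complex_Analysis.Complex_Analysis"
begin

definition pseudohyp :: "complex \<Rightarrow> complex \<Rightarrow> real" where
  "pseudohyp z1 z2 = cmod ((z1 - z2) / (1 - z1 * cnj z2))"

definition phball :: "complex \<Rightarrow> real \<Rightarrow> complex set" where
  "phball z R = {w \<in> ball 0 1. pseudohyp w z < R}"

definition hyp_measure :: "complex set \<Rightarrow> ennreal" where
  "hyp_measure E = (\<integral>\<^sup>+ z. ennreal ((1 - (cmod z)\<^sup>2) powr (-2)) * indicator E z \<partial>lebesgue)"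

definition bergman_norm_p :: "real \<Rightarrow> real \<Rightarrow> (complex \<Rightarrow> complex) \<Rightarrow> ennreal" where
  "bergman_norm_p p \<alpha> G = ennreal (1 / pi) *
     (\<integral>\<^sup>+ z. ennreal ((cmod (G z)) powr p * (1 - (cmod z)\<^sup>2) powr (\<alpha> - 2))
        * indicator (ball 0 1) z \<partial>lebesgue)"

definition bergman_space :: "real \<Rightarrow> real \<Rightarrow> (complex \<Rightarrow> complex) set" where
  "bergman_space p \<alpha> = {F. F holomorphic_on ball 0 1 \<and> bergman_norm_p p \<alpha> F < \<infinity>}"

definition C_alpha :: "real \<Rightarrow> real \<Rightarrow> real" where
  "C_alpha \<alpha> R = (1 / (\<alpha> - 1)) * (1 - (1 - R\<^sup>2) powr (\<alpha> - 1))"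

definition rho_D :: "complex set \<Rightarrow> real \<Rightarrow> ennreal" where
  "rho_D \<Omega> R = (SUP z\<in>ball 0 1. hyp_measure (\<Omega> \<inter> phball z R))"

end

theory Submission
  imports Defs "HOL-Real_Asymp.Real_Asymp"
begin

text \<open>
  For \<open>z\<close> in the disc let \<open>\<phi>\<^sub>z(v) = (z - v) / (1 - cnj z v)\<close> be the automorphism exchanging
  \<open>0\<close> and \<open>z\<close>; it maps the disc \<open>|v| < R\<close> onto the pseudohyperbolic ball \<open>B(z, R)\<close>.
  Changing variables by \<open>\<phi>\<^sub>z\<close> turns \<open>\<integral>\<^bsub>B(z,R)\<^esub> |F(u)| (1 - |u|\<^sup>2)\<^bsup>\<alpha>-2\<^esup> du\<close> into
  \<open>(1 - |z|\<^sup>2)\<^sup>\<alpha> \<integral>\<^bsub>|v|<R\<^esub> |H(v)| (1 - |v|\<^sup>2)\<^bsup>\<alpha>-2\<^esup> dv\<close> with the holomorphic function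
  \<open>H(v) = F(\<phi>\<^sub>z(v)) (1 - cnj z v)\<^bsup>-2\<alpha>\<^esup>\<close>, and \<open>H(0) = F(z)\<close>. In polar coordinates the
  sub-mean-value property of \<open>|H|\<close> on circles bounds the latter integral from below by
  \<open>\<pi> C\<^sup>\<alpha>(R) |F(z)|\<close>. So \<open>|F(z)| (1 - |z|\<^sup>2)\<^bsup>\<alpha>-2\<^esup>\<close> is at most \<open>(1 - |z|\<^sup>2)\<^bsup>-2\<^esup> / (\<pi> C\<^sup>\<alpha>(R))\<close>
  times the integral of \<open>|F| (1 - |u|\<^sup>2)\<^bsup>\<alpha>-2\<^esup>\<close> over \<open>B(z, R)\<close>. Integrating over \<open>\<Omega>\<close> and
  exchanging the order of integration, which the symmetry of the pseudohyperbolic metric makes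
  possible, gives the theorem with the constant \<open>1 / (\<pi> C\<^sup>\<alpha>(R)) \<le> 2 / C\<^sup>\<alpha>(R)\<close>.
\<close>

section \<open>Lebesgue measure on the complex plane\<close>

text \<open>The change-of-variables theorem of HOL-Analysis is stated on \<open>real^'n\<close> only, so
  \<open>\<complex>\<close> is identified with \<open>real^2\<close>.\<close>

definition vec_of_complex :: "complex \<Rightarrow> real^2" where
  "vec_of_complex z = (\<chi> i. if i = 1 then Re z else Im z)"

definition complex_of_vec :: "real^2 \<Rightarrow> complex" where
  "complex_of_vec p = Complex (p$1) (p$2)"

lemma vec_of_complex_nth [simp]: "vec_of_complex z $ 1 = Re z" "vec_of_complex z $ 2 = Im z"
  by (auto simp: vec_of_complex_def)

lemma complex_of_vec_of_complex [simp]: "complex_of_vec (vec_of_complex z) = z"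
  by (simp add: complex_of_vec_def)

lemma vec_of_complex_of_vec [simp]: "vec_of_complex (complex_of_vec p) = p"
  by (simp add: vec_eq_iff forall_2 complex_of_vec_def)

lemma linear_vec_of_complex: "linear vec_of_complex"
  by (rule linearI) (auto simp: vec_eq_iff forall_2)

lemma linear_complex_of_vec: "linear complex_of_vec"
  by (rule linearI) (auto simp: complex_of_vec_def complex_eq_iff)

lemma continuous_on_complex_of_vec [continuous_intros]: "continuous_on S complex_of_vec"
  by (simp add: linear_continuous_on linear_complex_of_vec linear_linear)

lemma continuous_on_vec_of_complex [continuous_intros]: "continuous_on S vec_of_complex"
  by (simp add: linear_continuous_on linear_vec_of_complex linear_linear)

lemma borel_measurable_vec_of_complex [measurable]: "vec_of_complex \<in> borel_measurable borel"
  by (intro borel_measurable_continuous_onI continuous_on_vec_of_complex)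

lemma borel_measurable_complex_of_vec [measurable]: "complex_of_vec \<in> borel_measurable borel"
  by (intro borel_measurable_continuous_onI continuous_on_complex_of_vec)

lemma lborel_vec2_eq_distr_complex: "(lborel :: (real^2) measure) = distr lborel borel vec_of_complex"
proof (rule lborel_eqI)
  fix l u :: "real^2" assume le: "\<And>b. b \<in> Basis \<Longrightarrow> l \<bullet> b \<le> u \<bullet> b"
  have Basis_vec2: "(Basis :: (real^2) set) = {axis 1 1, axis 2 1}" "axis 1 (1::real) \<noteq> (axis 2 1 :: real^2)"
    by (auto simp: Basis_vec_def UNIV_2 axis_eq_axis)
  have "vec_of_complex -` box l u = box (complex_of_vec l) (complex_of_vec u)"
    by (auto simp: in_box_complex_iff mem_box_cart forall_2 complex_of_vec_def)
  then have "emeasure (distr lborel borel vec_of_complex) (box l u)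
      = emeasure lborel (box (complex_of_vec l) (complex_of_vec u))"
    by (simp add: emeasure_distr)
  also have "\<dots> = (u $ 1 - l $ 1) * (u $ 2 - l $ 2)"
    using le[of "axis 1 1"] le[of "axis 2 1"]
    by (simp add: Basis_vec2 emeasure_lborel_box_eq Basis_complex_def complex_of_vec_def
        inner_complex_def ennreal_mult cart_eq_inner_axis)
  also have "\<dots> = (\<Prod>b\<in>Basis. (u - l) \<bullet> b)"
    by (simp add: Basis_vec2 cart_eq_inner_axis inner_diff_left)
  finally show "emeasure (distr lborel borel vec_of_complex) (box l u) = (\<Prod>b\<in>Basis. (u - l) \<bullet> b)" .
qed simp

lemma nn_integral_complex_eq_vec2:
  assumes [measurable]: "f \<in> borel_measurable borel"
  shows "(\<integral>\<^sup>+z. f z \<partial>(lborel :: complex measure)) = (\<integral>\<^sup>+p. f (complex_of_vec p) \<partial>lborel)"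
  by (subst lborel_vec2_eq_distr_complex) (simp add: nn_integral_distr)

lemma borel_measurable_Complex_pair [measurable]:
  "(\<lambda>(x, y). Complex x y) \<in> borel_measurable (lborel \<Otimes>\<^sub>M lborel)"
proof -
  have "(\<lambda>p::real \<times> real. of_real (fst p) + \<i> * of_real (snd p)) \<in> borel_measurable borel"
    by (intro borel_measurable_continuous_onI continuous_intros)
  then show ?thesis
    by (simp add: lborel_prod case_prod_beta' Complex_eq)
qed

lemma lborel_complex_eq_distr_pair:
  "(lborel :: complex measure) = distr (lborel \<Otimes>\<^sub>M lborel) borel (\<lambda>(x, y). Complex x y)"
proof (rule lborel_eqI)
  fix l u :: complex assume le: "\<And>b. b \<in> Basis \<Longrightarrow> l \<bullet> b \<le> u \<bullet> b"
  have "Re l \<le> Re u" "Im l \<le> Im u"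
    using le[of 1] le[of \<i>] by (auto simp: Basis_complex_def inner_complex_def)
  moreover have "(\<lambda>(x, y). Complex x y) -` box l u \<inter> space (lborel \<Otimes>\<^sub>M lborel)
      = {Re l<..<Re u} \<times> {Im l<..<Im u}"
    by (auto simp: in_box_complex_iff space_pair_measure)
  ultimately show "emeasure (distr (lborel \<Otimes>\<^sub>M lborel) borel (\<lambda>(x, y). Complex x y)) (box l u)
      = (\<Prod>b\<in>Basis. (u - l) \<bullet> b)"
    by (simp add: emeasure_distr lborel.emeasure_pair_measure_Times ennreal_mult
        Basis_complex_def inner_complex_def)
qed simp

lemma nn_integral_complex_iterated:
  assumes [measurable]: "f \<in> borel_measurable borel"
  shows "(\<integral>\<^sup>+z. f z \<partial>(lborel :: complex measure)) = (\<integral>\<^sup>+y. (\<integral>\<^sup>+x. f (Complex x y) \<partial>lborel) \<partial>lborel)"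
proof -
  have "(\<integral>\<^sup>+z. f z \<partial>(lborel :: complex measure))
      = (\<integral>\<^sup>+p. f (Complex (fst p) (snd p)) \<partial>(lborel \<Otimes>\<^sub>M lborel))"
    by (subst lborel_complex_eq_distr_pair) (simp add: nn_integral_distr case_prod_beta')
  also have "\<dots> = (\<integral>\<^sup>+y. (\<integral>\<^sup>+x. f (Complex x y) \<partial>lborel) \<partial>lborel)"
    by (subst lborel_pair.nn_integral_snd[symmetric]) auto
  finally show ?thesis .
qed

section \<open>Change of variables for holomorphic maps\<close>

lemma has_integral_of_nn_integral_indicator:
  fixes f :: "'a::euclidean_space \<Rightarrow> real"
  assumes [measurable]: "f \<in> borel_measurable borel" "S \<in> sets borel"
    and nonneg: "\<And>x. 0 \<le> f x"
    and I: "(\<integral>\<^sup>+x\<in>S. f x \<partial>lborel) = ennreal r" and "0 \<le> r"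
  shows "(f has_integral r) S"
proof -
  have "(\<integral>\<^sup>+x. ennreal (indicator S x * f x) \<partial>lborel) = (\<integral>\<^sup>+x\<in>S. f x \<partial>lborel)"
    by (intro nn_integral_cong) (simp add: indicator_def)
  then have "(\<integral>\<^sup>+x. ennreal (indicator S x * f x) \<partial>lborel) = ennreal r"
    using I by simp
  moreover have "(\<lambda>x. indicator S x * f x) \<in> borel_measurable borel"
    by measurable
  ultimately have "((\<lambda>x. indicator S x * f x) has_integral r) UNIV"
    using nonneg \<open>0 \<le> r\<close> by (intro nn_integral_has_integral) auto
  moreover have "(\<lambda>x. indicator S x * f x) = (\<lambda>x. if x \<in> S then f x else 0)"
    by (auto simp: indicator_def)
  ultimately show ?thesis
    using has_integral_restrict_UNIV[of S f r] by simp
qed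

lemma nn_integral_change_of_variables_le:
  fixes f :: "real^'m::{finite,wellorder} \<Rightarrow> real" and g :: "real^'m::_ \<Rightarrow> real^'m::_"
  assumes S: "S \<in> sets borel" and gS: "g ` S \<in> sets borel"
    and der: "\<And>x. x \<in> S \<Longrightarrow> (g has_derivative g' x) (at x within S)" and inj: "inj_on g S"
    and f: "f \<in> borel_measurable borel" and nonneg: "\<And>y. 0 \<le> f y"
  shows "(\<integral>\<^sup>+x\<in>S. \<bar>det (matrix (g' x))\<bar> * f (g x) \<partial>lborel) \<le> (\<integral>\<^sup>+y\<in>g ` S. f y \<partial>lborel)"
proof (cases "(\<integral>\<^sup>+y\<in>g ` S. f y \<partial>lborel)" rule: ennreal_cases)
  case (real r)
  have S': "S \<in> sets lebesgue"
    using S by auto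
  have "(f has_integral r) (g ` S)"
    using real by (intro has_integral_of_nn_integral_indicator[OF f gS nonneg])
  then have "(\<lambda>y. vec (f y) :: real^1) absolutely_integrable_on g ` S
      \<and> integral (g ` S) (\<lambda>y. vec (f y) :: real^1) = vec r"
    using nonneg by (auto simp: absolutely_integrable_on_1_iff integral_on_1_eq integral_unique
        intro: nonnegative_absolutely_integrable_1)
  then have "(\<lambda>x. \<bar>det (matrix (g' x))\<bar> *\<^sub>R vec (f (g x)) :: real^1) absolutely_integrable_on S
      \<and> integral S (\<lambda>x. \<bar>det (matrix (g' x))\<bar> *\<^sub>R vec (f (g x)) :: real^1) = vec r"
    using has_absolute_integral_change_of_variables[OF S', of g g' "\<lambda>y. vec (f y)" "vec r"] der inj
    by blast
  then have "((\<lambda>x. \<bar>det (matrix (g' x))\<bar> * f (g x)) has_integral r) S"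
    by (auto simp: absolutely_integrable_on_1_iff integral_on_1_eq vec_eq_iff
        intro!: integrable_integral[THEN has_integral_eq_rhs] set_lebesgue_integral_eq_integral(1))
  then have "(\<integral>\<^sup>+x\<in>S. \<bar>det (matrix (g' x))\<bar> * f (g x) \<partial>lborel) = ennreal r"
    by (rule nn_integral_has_integral_lebesgue'[rotated]) (simp add: nonneg)
  then show ?thesis
    using real by simp
qed simp

lemma det_matrix_complex_mult:
  "det (matrix (vec_of_complex \<circ> (\<lambda>h. c * h) \<circ> complex_of_vec)) = (cmod c)\<^sup>2"
proof -
  have "complex_of_vec (axis 1 1) = 1" "complex_of_vec (axis 2 1) = \<i>"
    by (simp_all add: complex_of_vec_def axis_def complex_eq_iff)
  then show ?thesis
    using cmod_power2[of c] by (simp add: det_2 matrix_def power2_eq_square)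
qed

lemma borel_measurable_continuous_on_open_indicator:
  fixes h :: "'a::topological_space \<Rightarrow> real"
  assumes "open S" "continuous_on S h"
  shows "(\<lambda>x. ennreal (h x) * indicator S x) \<in> borel_measurable borel"
proof -
  have "(\<lambda>x. indicator S x *\<^sub>R h x) \<in> borel_measurable borel"
    using assms by (intro borel_measurable_continuous_on_indicator) auto
  then have "(\<lambda>x. ennreal (indicator S x *\<^sub>R h x)) \<in> borel_measurable borel"
    by measurable
  also have "(\<lambda>x. ennreal (indicator S x *\<^sub>R h x)) = (\<lambda>x. ennreal (h x) * indicator S x)"
    by (auto simp: indicator_def)
  finally show ?thesis .
qed

lemma borel_measurable_holomorphic_pullback:
  fixes f :: "complex \<Rightarrow> real" and g :: "complex \<Rightarrow> complex"
  assumes Q: "open Q" and holo: "g holomorphic_on Q" and f [measurable]: "f \<in> borel_measurable borel"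
  shows "(\<lambda>w. ennreal (f (g w) * (cmod (deriv g w))\<^sup>2) * indicator Q w) \<in> borel_measurable borel"
proof -
  define g0 where "g0 w = (if w \<in> Q then g w else 0)" for w
  define g0' where "g0' w = (if w \<in> Q then deriv g w else 0)" for w
  have "continuous_on Q g" "continuous_on Q (deriv g)"
    using holo holomorphic_deriv[OF holo Q] by (auto intro: holomorphic_on_imp_continuous_on)
  then have [measurable]: "g0 \<in> borel_measurable borel" "g0' \<in> borel_measurable borel"
    using Q unfolding g0_def[abs_def] g0'_def[abs_def] by (auto intro: borel_measurable_continuous_on_if)
  have [measurable]: "Q \<in> sets borel"
    using Q by simp
  have "(\<lambda>w. ennreal (f (g0 w) * (cmod (g0' w))\<^sup>2) * indicator Q w) \<in> borel_measurable borel"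
    by measurable
  also have "(\<lambda>w. ennreal (f (g0 w) * (cmod (g0' w))\<^sup>2) * indicator Q w)
      = (\<lambda>w. ennreal (f (g w) * (cmod (deriv g w))\<^sup>2) * indicator Q w)"
    by (auto simp: g0_def g0'_def indicator_def)
  finally show ?thesis .
qed

lemma has_derivative_vec_of_complex_conj:
  assumes "(g has_field_derivative c) (at (complex_of_vec x))"
  shows "(vec_of_complex \<circ> g \<circ> complex_of_vec has_derivative
           vec_of_complex \<circ> (\<lambda>h. c * h) \<circ> complex_of_vec) (at x)"
proof -
  have "(g \<circ> complex_of_vec has_derivative (\<lambda>h. c * h) \<circ> complex_of_vec) (at x)"
    using assms unfolding has_field_derivative_def
    by (rule diff_chain_at[OF linear_imp_has_derivative[OF linear_complex_of_vec]])
  then show ?thesis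
    unfolding o_assoc[symmetric]
    by (rule diff_chain_at[OF _ linear_imp_has_derivative[OF linear_vec_of_complex]])
qed

lemma image_vec_of_complex_conj:
  "(vec_of_complex \<circ> g \<circ> complex_of_vec) ` (complex_of_vec -` Q) = complex_of_vec -` (g ` Q)"
proof (intro equalityI subsetI)
  fix p assume "p \<in> complex_of_vec -` (g ` Q)"
  then obtain w where "w \<in> Q" "complex_of_vec p = g w"
    by auto
  then have "p = (vec_of_complex \<circ> g \<circ> complex_of_vec) (vec_of_complex w)" "vec_of_complex w \<in> complex_of_vec -` Q"
    by simp_all (metis vec_of_complex_of_vec)
  then show "p \<in> (vec_of_complex \<circ> g \<circ> complex_of_vec) ` (complex_of_vec -` Q)"
    by blast
qed auto

lemma inj_on_vec_of_complex_conj: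
  "inj_on g Q \<Longrightarrow> inj_on (vec_of_complex \<circ> g \<circ> complex_of_vec) (complex_of_vec -` Q)"
  by (auto simp: inj_on_def) (metis complex_of_vec_of_complex vec_of_complex_of_vec)

lemma nn_integral_holomorphic_change_of_variables_le:
  fixes f :: "complex \<Rightarrow> real" and g :: "complex \<Rightarrow> complex"
  assumes Q: "open Q" and holo: "g holomorphic_on Q" and inj: "inj_on g Q"
    and f [measurable]: "f \<in> borel_measurable borel" and nonneg: "\<And>u. 0 \<le> f u"
  shows "(\<integral>\<^sup>+w\<in>Q. f (g w) * (cmod (deriv g w))\<^sup>2 \<partial>lborel) \<le> (\<integral>\<^sup>+u\<in>g ` Q. f u \<partial>lborel)"
proof -
  define S where "S = complex_of_vec -` Q"
  define G where "G = vec_of_complex \<circ> g \<circ> complex_of_vec"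
  define G' where "G' x = vec_of_complex \<circ> (\<lambda>h. deriv g (complex_of_vec x) * h) \<circ> complex_of_vec" for x
  have [measurable]: "Q \<in> sets borel" "g ` Q \<in> sets borel"
    using Q open_mapping_thm3[OF holo Q inj] by auto
  have S_borel: "S \<in> sets borel"
    unfolding S_def using measurable_sets[OF borel_measurable_complex_of_vec] by simp
  have GS: "G ` S = complex_of_vec -` (g ` Q)"
    unfolding G_def S_def by (rule image_vec_of_complex_conj)
  have GS_borel: "G ` S \<in> sets borel"
    unfolding GS using measurable_sets[OF borel_measurable_complex_of_vec] by simp
  have der: "(G has_derivative G' x) (at x within S)" if "x \<in> S" for x
    using holomorphic_derivI[OF holo Q, of "complex_of_vec x" UNIV] that
    unfolding G_def G'_def S_def
    by (auto intro: has_derivative_at_withinI has_derivative_vec_of_complex_conj)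
  have inj_G: "inj_on G S"
    unfolding G_def S_def using inj by (rule inj_on_vec_of_complex_conj)
  have "(\<integral>\<^sup>+w\<in>Q. f (g w) * (cmod (deriv g w))\<^sup>2 \<partial>lborel)
      = (\<integral>\<^sup>+p\<in>S. f (g (complex_of_vec p)) * (cmod (deriv g (complex_of_vec p)))\<^sup>2 \<partial>lborel)"
    using borel_measurable_holomorphic_pullback[OF Q holo f]
    by (subst nn_integral_complex_eq_vec2) (simp_all add: S_def indicator_def)
  also have "\<dots> = (\<integral>\<^sup>+x\<in>S. \<bar>det (matrix (G' x))\<bar> * f (complex_of_vec (G x)) \<partial>lborel)"
    unfolding G_def G'_def det_matrix_complex_mult by (simp add: mult.commute)
  also have "\<dots> \<le> (\<integral>\<^sup>+y\<in>G ` S. f (complex_of_vec y) \<partial>lborel)"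
    using nonneg by (intro nn_integral_change_of_variables_le S_borel GS_borel der inj_G) auto
  also have "\<dots> = (\<integral>\<^sup>+u\<in>g ` Q. f u \<partial>lborel)"
    by (subst nn_integral_complex_eq_vec2) (auto simp: GS indicator_def)
  finally show ?thesis .
qed

section \<open>Automorphisms of the disc\<close>

lemma pseudohyp_commute: "pseudohyp a b = pseudohyp b a"
proof -
  have "cmod (1 - a * cnj b) = cmod (1 - b * cnj a)"
    by (metis complex_cnj_cnj complex_cnj_diff complex_cnj_mult complex_cnj_one complex_mod_cnj mult.commute)
  then show ?thesis
    by (simp add: pseudohyp_def norm_divide norm_minus_commute)
qed


definition disc_involution :: "complex \<Rightarrow> complex \<Rightarrow> complex" where
  "disc_involution a v = (a - v) / (1 - cnj a * v)"

lemma Re_one_minus_cnj_mult_pos: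
  assumes "cmod a < 1" "cmod v < 1"
  shows "0 < Re (1 - cnj a * v)"
proof -
  have "Re (cnj a * v) \<le> cmod a * cmod v"
    using complex_Re_le_cmod[of "cnj a * v"] by (simp add: norm_mult)
  also have "\<dots> < 1"
    using assms by (metis mult_strict_mono' norm_ge_zero mult_1)
  finally show ?thesis
    by simp
qed

lemma one_minus_cnj_mult_nonzero:
  "cmod a < 1 \<Longrightarrow> cmod v < 1 \<Longrightarrow> 1 - cnj a * v \<noteq> 0"
  using Re_one_minus_cnj_mult_pos by fastforce

lemma one_minus_norm_disc_involution:
  assumes "cmod a < 1" "cmod v < 1"
  shows "1 - (cmod (disc_involution a v))\<^sup>2 = (1 - (cmod a)\<^sup>2) * (1 - (cmod v)\<^sup>2) / (cmod (1 - cnj a * v))\<^sup>2"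
proof -
  define m where "m = cmod (1 - cnj a * v)"
  have "m > 0"
    using one_minus_cnj_mult_nonzero[OF assms] by (simp add: m_def)
  moreover have norm_eq: "cmod (disc_involution a v) = cmod (a - v) / m"
    by (simp add: disc_involution_def norm_divide m_def)
  ultimately have "1 - (cmod (disc_involution a v))\<^sup>2 = (m\<^sup>2 - (cmod (a - v))\<^sup>2) / m\<^sup>2"
    unfolding norm_eq by (simp add: power_divide diff_divide_distrib)
  also have "m\<^sup>2 - (cmod (a - v))\<^sup>2 = (1 - (cmod a)\<^sup>2) * (1 - (cmod v)\<^sup>2)"
    unfolding m_def cmod_power2 by (simp add: power2_eq_square algebra_simps)
  finally show ?thesis
    by (simp add: m_def)
qed

lemma norm_disc_involution_lt_1:
  assumes "cmod a < 1" "cmod v < 1"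
  shows "cmod (disc_involution a v) < 1"
proof -
  have "(cmod a)\<^sup>2 < 1" "(cmod v)\<^sup>2 < 1" "cmod (1 - cnj a * v) \<noteq> 0"
    using assms one_minus_cnj_mult_nonzero[OF assms] by (simp_all add: abs_square_less_1)
  then have "0 < 1 - (cmod (disc_involution a v))\<^sup>2"
    by (simp add: one_minus_norm_disc_involution[OF assms])
  then show ?thesis
    by (simp add: abs_square_less_1)
qed

lemma disc_involution_eqs:
  assumes "cmod a < 1" "cmod v < 1"
  shows "a - disc_involution a v = v * (1 - cnj a * a) / (1 - cnj a * v)"
    and "1 - cnj a * disc_involution a v = (1 - cnj a * a) / (1 - cnj a * v)"
  using one_minus_cnj_mult_nonzero[OF assms]
  by (simp_all add: disc_involution_def field_simps)

lemma disc_involution_involutive: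
  assumes "cmod a < 1" "cmod v < 1"
  shows "disc_involution a (disc_involution a v) = v"
proof -
  have "(v * c / d) / (c / d) = v" if "c \<noteq> 0" "d \<noteq> 0" for c d :: complex
    using that by simp
  then have "(v * (1 - cnj a * a) / (1 - cnj a * v)) / ((1 - cnj a * a) / (1 - cnj a * v)) = v"
    using one_minus_cnj_mult_nonzero assms by auto
  then show ?thesis
    by (simp only: disc_involution_def[of a "disc_involution a v"] disc_involution_eqs[OF assms])
qed

lemma pseudohyp_disc_involution:
  assumes "cmod a < 1" "cmod v < 1"
  shows "pseudohyp (disc_involution a v) a = cmod v"
proof -
  have "pseudohyp (disc_involution a v) a = cmod (disc_involution a (disc_involution a v))"
    by (simp add: pseudohyp_def disc_involution_def norm_divide norm_minus_commute mult.commute)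
  then show ?thesis
    by (simp add: disc_involution_involutive[OF assms])
qed

lemma has_field_derivative_disc_involution:
  assumes "1 - cnj a * v \<noteq> 0"
  shows "(disc_involution a has_field_derivative (cnj a * a - 1) / (1 - cnj a * v)\<^sup>2) (at v)"
  unfolding disc_involution_def[abs_def]
  using assms by (auto intro!: derivative_eq_intros simp: field_simps power2_eq_square)

lemma norm_deriv_disc_involution:
  assumes "cmod a < 1" "cmod v < 1"
  shows "cmod (deriv (disc_involution a) v) = (1 - (cmod a)\<^sup>2) / (cmod (1 - cnj a * v))\<^sup>2"
proof -
  have "cnj a * a - 1 = of_real ((cmod a)\<^sup>2 - 1)"
    by (simp add: complex_norm_square[symmetric] mult.commute)
  then have "cmod (cnj a * a - 1) = 1 - (cmod a)\<^sup>2"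
    using assms(1) abs_square_less_1[of "cmod a"] by (simp only: norm_of_real) simp
  then show ?thesis
    using DERIV_imp_deriv[OF has_field_derivative_disc_involution[OF one_minus_cnj_mult_nonzero[OF assms]]]
    by (simp add: norm_divide norm_power)
qed

lemma holomorphic_on_disc_involution: "cmod a < 1 \<Longrightarrow> disc_involution a holomorphic_on ball 0 1"
  unfolding disc_involution_def[abs_def]
  by (intro holomorphic_intros) (auto dest: one_minus_cnj_mult_nonzero)

lemma inj_on_disc_involution: "cmod a < 1 \<Longrightarrow> inj_on (disc_involution a) (ball 0 1)"
  by (metis disc_involution_involutive inj_onI mem_ball_0)

lemma disc_involution_ball_subset_phball:
  assumes "cmod a < 1" "R \<le> 1"
  shows "disc_involution a ` ball 0 R \<subseteq> phball a R"
  using assms norm_disc_involution_lt_1 pseudohyp_disc_involution by (force simp: phball_def)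

lemma disc_involution_weight:
  assumes "cmod a < 1" "cmod v < 1"
  shows "(1 - (cmod (disc_involution a v))\<^sup>2) powr (\<alpha> - 2) * (cmod (deriv (disc_involution a) v))\<^sup>2
       = (1 - (cmod a)\<^sup>2) powr \<alpha> * (1 - (cmod v)\<^sup>2) powr (\<alpha> - 2) / cmod (1 - cnj a * v) powr (2 * \<alpha>)"
proof -
  define p t m where "p = 1 - (cmod a)\<^sup>2" and "t = 1 - (cmod v)\<^sup>2" and "m = cmod (1 - cnj a * v)"
  have pos: "0 < p" "0 < t" "0 < m"
    using assms one_minus_cnj_mult_nonzero[OF assms]
    by (auto simp: p_def t_def m_def abs_square_less_1)
  have "(1 - (cmod (disc_involution a v))\<^sup>2) powr (\<alpha> - 2) * (cmod (deriv (disc_involution a) v))\<^sup>2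
      = (p * t / m\<^sup>2) powr (\<alpha> - 2) * (p\<^sup>2 / m ^ 4)"
    by (simp add: one_minus_norm_disc_involution norm_deriv_disc_involution assms p_def t_def m_def
        power_divide flip: power_mult)
  also have "(p * t / m\<^sup>2) powr (\<alpha> - 2) = p powr (\<alpha> - 2) * t powr (\<alpha> - 2) / m powr (2 * \<alpha> - 4)"
    using pos by (simp add: powr_mult powr_divide powr_powr algebra_simps flip: powr_numeral)
  also have "p\<^sup>2 / m ^ 4 = p powr 2 / m powr 4"
    using pos by simp
  also have "p powr (\<alpha> - 2) * t powr (\<alpha> - 2) / m powr (2 * \<alpha> - 4) * (p powr 2 / m powr 4)
      = (p powr (\<alpha> - 2) * p powr 2) * t powr (\<alpha> - 2) / (m powr (2 * \<alpha> - 4) * m powr 4)"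
    by simp
  also have "\<dots> = p powr \<alpha> * t powr (\<alpha> - 2) / m powr (2 * \<alpha>)"
    by (simp flip: powr_add)
  finally show ?thesis
    by (simp add: p_def t_def m_def)
qed

section \<open>A weighted sub-mean-value inequality\<close>

lemma has_integral_circlepath_mean:
  fixes H :: "complex \<Rightarrow> complex"
  assumes H: "H holomorphic_on cball 0 r" and r: "0 < r"
  shows "((\<lambda>x. H (circlepath 0 r x)) has_integral H 0) {0..1}"
proof -
  let ?c = "circlepath 0 r"
  have "((\<lambda>u. H u / (u - 0)) has_contour_integral (2 * of_real pi * \<i> * H 0)) ?c"
    using H r by (intro Cauchy_integral_circlepath_simple) auto
  then have "((\<lambda>x. H (?c x) / ?c x * vector_derivative ?c (at x)) has_integral 2 * of_real pi * \<i> * H 0) {0..1}"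
    by (simp add: has_contour_integral)
  moreover have "H (?c x) / ?c x * vector_derivative ?c (at x) = 2 * of_real pi * \<i> * H (?c x)" for x
    using r by (simp only: vector_derivative_circlepath) (simp add: circlepath)
  ultimately have "((\<lambda>x. 2 * of_real pi * \<i> * H (?c x)) has_integral 2 * of_real pi * \<i> * H 0) {0..1}"
    by simp
  from has_integral_mult_right[OF this, of "inverse (2 * of_real pi * \<i>)"] show ?thesis
    by (simp add: field_simps)
qed

lemma norm_le_nn_integral_circlepath:
  fixes H :: "complex \<Rightarrow> complex"
  assumes H: "H holomorphic_on cball 0 r" and r: "0 < r" and c: "0 \<le> c"
  shows "ennreal (c * cmod (H 0)) \<le> (\<integral>\<^sup>+x\<in>{0<..<1}. c * cmod (H (circlepath 0 r x)) \<partial>lborel)"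
proof -
  let ?c = "circlepath 0 r"
  have "continuous_on {0..1} (\<lambda>x. H (?c x))"
    using H r path_image_circlepath[of 0 r] unfolding path_image_def
    by (intro continuous_on_compose2[OF holomorphic_on_imp_continuous_on[OF H] path_circlepath[unfolded path_def]])
       auto
  then have int: "(\<lambda>x. cmod (H (?c x))) integrable_on {0..1}"
    by (intro integrable_continuous_interval continuous_intros)
  have mean: "((\<lambda>x. H (?c x)) has_integral H 0) {0..1}"
    using H r by (rule has_integral_circlepath_mean)
  have "cmod (H 0) \<le> integral {0..1} (\<lambda>x. cmod (H (?c x)))"
    using integral_norm_bound_integral[OF has_integral_integrable[OF mean] int] mean
    by (simp add: integral_unique)
  then have "c * cmod (H 0) \<le> c * integral {0..1} (\<lambda>x. cmod (H (?c x)))"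
    using c by (rule mult_left_mono)
  also have "ennreal (c * integral {0..1} (\<lambda>x. cmod (H (?c x))))
      = (\<integral>\<^sup>+x\<in>{0<..<1}. c * cmod (H (?c x)) \<partial>lborel)"
    using has_integral_mult_right[OF integrable_integral[OF int], of c] c
      has_integral_open_interval[of "\<lambda>x. c * cmod (H (?c x))" _ 0 1]
    by (intro nn_integral_has_integral_lebesgue'[symmetric]) simp_all
  finally show ?thesis
    by (simp add: ennreal_leI)
qed

text \<open>With \<open>t = exp (-4\<pi>y)\<close> this is \<open>\<integral>\<^sub>0\<^bsup>R\<^sup>2\<^esup> (1 - t)\<^bsup>\<alpha>-2\<^esup> dt / (4\<pi>)\<close>.\<close>

lemma nn_integral_strip_weight:
  assumes \<alpha>: "\<alpha> > 1" and R: "0 < R" "R < 1"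
  shows "(\<integral>\<^sup>+y\<in>{- ln R / (2 * pi)<..}. exp (-4 * pi * y) * (1 - exp (-4 * pi * y)) powr (\<alpha> - 2) \<partial>lborel)
           = ennreal (C_alpha \<alpha> R / (4 * pi))"
proof -
  define b where "b = - ln R / (2 * pi)"
  define F where "F y = (1 - exp (-4 * pi * y)) powr (\<alpha> - 1) / (4 * pi * (\<alpha> - 1))" for y
  have "b > 0"
    using R by (simp add: b_def divide_neg_pos)
  have "exp (-4 * pi * b) = exp (ln R) ^ 2"
    using exp_of_nat_mult[of 2 "ln R"] by (simp add: b_def)
  then have "exp (-4 * pi * b) = R\<^sup>2"
    using R by simp
  then have F_b: "F b = (1 - R\<^sup>2) powr (\<alpha> - 1) / (4 * pi * (\<alpha> - 1))"
    by (simp add: F_def)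
  have "(\<integral>\<^sup>+y\<in>{b..}. exp (-4 * pi * y) * (1 - exp (-4 * pi * y)) powr (\<alpha> - 2) \<partial>lborel)
      = 1 / (4 * pi * (\<alpha> - 1)) - F b"
  proof (rule nn_integral_FTC_atLeast)
    show "(\<lambda>y. exp (-4 * pi * y) * (1 - exp (-4 * pi * y)) powr (\<alpha> - 2)) \<in> borel_measurable borel"
      by measurable
  next
    fix y assume "b \<le> y"
    then have "0 < 1 - exp (-4 * pi * y)"
      using \<open>b > 0\<close> by simp
    then have "(F has_real_derivative (\<alpha> - 1) * (1 - exp (-4 * pi * y)) powr (\<alpha> - 1 - 1)
        * (4 * pi * exp (-4 * pi * y)) / (4 * pi * (\<alpha> - 1))) (at y)"
      unfolding F_def[abs_def] by (auto intro!: derivative_eq_intros)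
    moreover have "(\<alpha> - 1) * (1 - exp (-4 * pi * y)) powr (\<alpha> - 1 - 1) * (4 * pi * exp (-4 * pi * y))
        / (4 * pi * (\<alpha> - 1)) = exp (-4 * pi * y) * (1 - exp (-4 * pi * y)) powr (\<alpha> - 2)"
      using \<alpha> by simp
    ultimately show "(F has_real_derivative exp (-4 * pi * y) * (1 - exp (-4 * pi * y)) powr (\<alpha> - 2)) (at y)"
      by (simp only:)
  next
    have "((\<lambda>y. exp (-4 * pi * y)) \<longlongrightarrow> 0) at_top"
      by real_asymp
    then have "(F \<longlongrightarrow> (1 - 0) powr (\<alpha> - 1) / (4 * pi * (\<alpha> - 1))) at_top"
      unfolding F_def[abs_def] using \<alpha> by (intro tendsto_intros) auto
    then show "(F \<longlongrightarrow> 1 / (4 * pi * (\<alpha> - 1))) at_top"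
      by simp
  qed simp
  also have "(\<integral>\<^sup>+y\<in>{b..}. exp (-4 * pi * y) * (1 - exp (-4 * pi * y)) powr (\<alpha> - 2) \<partial>lborel)
      = (\<integral>\<^sup>+y\<in>{b<..}. exp (-4 * pi * y) * (1 - exp (-4 * pi * y)) powr (\<alpha> - 2) \<partial>lborel)"
    using AE_lborel_singleton[of b]
    by (intro nn_integral_cong_AE) (auto elim!: eventually_mono simp: indicator_def)
  also have "1 / (4 * pi * (\<alpha> - 1)) - F b = C_alpha \<alpha> R / (4 * pi)"
    using \<alpha> by (simp add: F_b C_alpha_def field_simps)
  finally show ?thesis
    by (simp add: b_def)
qed

lemma exp_2pi_i_Complex: "exp (2 * of_real pi * \<i> * Complex x y) = circlepath 0 (exp (-2 * pi * y)) x"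
proof -
  have "2 * of_real pi * \<i> * Complex x y = of_real (-2 * pi * y) + 2 * of_real pi * \<i> * of_real x"
    by (simp add: Complex_eq algebra_simps)
  then have "exp (2 * of_real pi * \<i> * Complex x y)
      = exp (of_real (-2 * pi * y)) * exp (2 * of_real pi * \<i> * of_real x)"
    by (simp only: exp_add)
  then show ?thesis
    by (simp only: circlepath exp_of_real add_0)
qed

text \<open>\<open>w \<mapsto> exp (2\<pi>i w)\<close> maps the strip bijectively onto the punctured disc \<open>0 < |v| < R\<close>;
  it replaces polar coordinates.\<close>

definition exp_strip :: "real \<Rightarrow> complex set" where
  "exp_strip R = {w. 0 < Re w \<and> Re w < 1 \<and> - ln R / (2 * pi) < Im w}"

lemma open_exp_strip: "open (exp_strip R)"
  unfolding exp_strip_def by (intro open_Collect_conj open_Collect_less continuous_intros)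

lemma Im_pos_exp_strip: "0 < R \<Longrightarrow> R < 1 \<Longrightarrow> w \<in> exp_strip R \<Longrightarrow> 0 < Im w"
  by (auto simp: exp_strip_def divide_neg_pos intro: order.strict_trans[rotated])

lemma norm_exp_2pi_i_exp_strip:
  assumes "0 < R" "w \<in> exp_strip R"
  shows "cmod (exp (2 * of_real pi * \<i> * w)) < R"
proof -
  have "cmod (exp (2 * of_real pi * \<i> * w)) < exp (-2 * pi * (- ln R / (2 * pi)))"
    using assms(2) by (simp add: exp_strip_def field_simps)
  also have "\<dots> = R"
    using assms(1) by simp
  finally show ?thesis .
qed

lemma inj_on_exp_2pi_i_exp_strip: "inj_on (\<lambda>w. exp (2 * of_real pi * \<i> * w)) (exp_strip R)"
proof (rule inj_onI)
  fix w z assume w: "w \<in> exp_strip R" and z: "z \<in> exp_strip R"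
    and "exp (2 * of_real pi * \<i> * w) = exp (2 * of_real pi * \<i> * z)"
  then obtain n :: int where n: "2 * of_real pi * \<i> * w = 2 * of_real pi * \<i> * z + of_real (of_int (2 * n) * pi) * \<i>"
    unfolding exp_eq by blast
  have "Im (2 * of_real pi * \<i> * w) = Im (2 * of_real pi * \<i> * z + of_real (of_int (2 * n) * pi) * \<i>)"
    "Re (2 * of_real pi * \<i> * w) = Re (2 * of_real pi * \<i> * z + of_real (of_int (2 * n) * pi) * \<i>)"
    using n by simp_all
  then have "pi * (Re w - Re z - n) = 0" "Im w = Im z"
    by (simp_all add: algebra_simps)
  then have "Re w = Re z + n" "Im w = Im z"
    by simp_all
  moreover from this w z have "n = 0"
    by (auto simp: exp_strip_def)
  ultimately show "w = z"
    by (simp add: complex_eq_iff)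
qed

lemma deriv_exp_2pi_i:
  "deriv (\<lambda>w. exp (2 * of_real pi * \<i> * w)) w = 2 * of_real pi * \<i> * exp (2 * of_real pi * \<i> * w)"
  by (rule DERIV_imp_deriv) (auto intro!: derivative_eq_intros)

lemma norm_le_nn_integral_exp_strip:
  fixes H :: "complex \<Rightarrow> complex"
  assumes H: "H holomorphic_on ball 0 1" and \<alpha>: "\<alpha> > 1" and R: "0 < R" "R < 1"
  shows "ennreal (pi * C_alpha \<alpha> R * cmod (H 0))
           \<le> (\<integral>\<^sup>+w\<in>exp_strip R. 4 * pi\<^sup>2 * (exp (-4 * pi * Im w) * (1 - exp (-4 * pi * Im w)) powr (\<alpha> - 2))
                  * cmod (H (exp (2 * of_real pi * \<i> * w))) \<partial>lborel)"
proof -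
  define b where "b = - ln R / (2 * pi)"
  define K where "K y = exp (-4 * pi * y) * (1 - exp (-4 * pi * y)) powr (\<alpha> - 2)" for y
  define g where "g w = 4 * pi\<^sup>2 * K (Im w) * cmod (H (exp (2 * of_real pi * \<i> * w)))" for w
  have "b > 0"
    using R by (simp add: b_def divide_neg_pos)
  have K_nonneg: "0 \<le> K y" for y
    by (simp add: K_def)
  have strip_Complex: "Complex x y \<in> exp_strip R \<longleftrightarrow> x \<in> {0<..<1} \<and> b < y" for x y
    by (simp add: exp_strip_def b_def)
  have [measurable]: "(\<lambda>w. ennreal (g w) * indicator (exp_strip R) w) \<in> borel_measurable borel"
  proof (rule borel_measurable_continuous_on_open_indicator[OF open_exp_strip])
    have "(\<lambda>w. exp (2 * of_real pi * \<i> * w)) ` exp_strip R \<subseteq> ball 0 1"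
      using Im_pos_exp_strip[OF R] by auto
    then have "continuous_on (exp_strip R) (\<lambda>w. H (exp (2 * of_real pi * \<i> * w)))"
      by (intro continuous_on_compose2[OF holomorphic_on_imp_continuous_on[OF H]] continuous_intros)
    moreover have "continuous_on (exp_strip R) (\<lambda>w. K (Im w))"
      unfolding K_def using R Im_pos_exp_strip by (intro continuous_intros) force+
    ultimately show "continuous_on (exp_strip R) g"
      unfolding g_def by (intro continuous_intros)
  qed
  have inner: "ennreal (4 * pi\<^sup>2 * K y * cmod (H 0)) * indicator {b<..} y
      \<le> (\<integral>\<^sup>+x. ennreal (g (Complex x y)) * indicator (exp_strip R) (Complex x y) \<partial>lborel)" for y
  proof (cases "b < y")
    case True
    define r where "r = exp (-2 * pi * y)"
    have "0 < r" "r < 1"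
      using True \<open>b > 0\<close> by (simp_all add: r_def)
    then have "ennreal (4 * pi\<^sup>2 * K y * cmod (H 0))
        \<le> (\<integral>\<^sup>+x\<in>{0<..<1}. 4 * pi\<^sup>2 * K y * cmod (H (circlepath 0 r x)) \<partial>lborel)"
      using K_nonneg by (intro norm_le_nn_integral_circlepath holomorphic_on_subset[OF H]) auto
    also have "\<dots> = (\<integral>\<^sup>+x. ennreal (g (Complex x y)) * indicator (exp_strip R) (Complex x y) \<partial>lborel)"
      using True by (intro nn_integral_cong) (auto simp: g_def strip_Complex exp_2pi_i_Complex r_def indicator_def)
    finally show ?thesis
      using True by simp
  qed simp
  have "ennreal (pi * C_alpha \<alpha> R * cmod (H 0)) = ennreal (4 * pi\<^sup>2 * cmod (H 0) * (C_alpha \<alpha> R / (4 * pi)))"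
    by (simp add: power2_eq_square mult_ac)
  also have "\<dots> = ennreal (4 * pi\<^sup>2 * cmod (H 0)) * ennreal (C_alpha \<alpha> R / (4 * pi))"
    by (rule ennreal_mult') simp
  also have "ennreal (C_alpha \<alpha> R / (4 * pi)) = (\<integral>\<^sup>+y\<in>{b<..}. K y \<partial>lborel)"
    using nn_integral_strip_weight[OF \<alpha> R] by (simp add: K_def b_def)
  also have "ennreal (4 * pi\<^sup>2 * cmod (H 0)) * (\<integral>\<^sup>+y\<in>{b<..}. K y \<partial>lborel)
      = (\<integral>\<^sup>+y. ennreal (4 * pi\<^sup>2 * K y * cmod (H 0)) * indicator {b<..} y \<partial>lborel)"
    using K_nonneg by (subst nn_integral_cmult[symmetric]) (auto simp: K_def ennreal_mult mult_ac)
  also have "\<dots> \<le> (\<integral>\<^sup>+y. (\<integral>\<^sup>+x. ennreal (g (Complex x y)) * indicator (exp_strip R) (Complex x y) \<partial>lborel) \<partial>lborel)"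
    by (intro nn_integral_mono inner)
  also have "\<dots> = (\<integral>\<^sup>+w\<in>exp_strip R. g w \<partial>lborel)"
    by (rule nn_integral_complex_iterated[symmetric]) measurable
  finally show ?thesis
    by (simp add: g_def K_def)
qed

lemma continuous_on_weighted_norm:
  assumes "continuous_on S G" "S \<subseteq> ball 0 1"
  shows "continuous_on S (\<lambda>v. cmod (G v) * (1 - (cmod v)\<^sup>2) powr (\<alpha> - 2))"
  using assms by (intro continuous_intros) (auto simp: abs_square_eq_1)

lemma norm_le_weighted_integral_ball:
  fixes H :: "complex \<Rightarrow> complex"
  assumes H: "H holomorphic_on ball 0 1" and \<alpha>: "\<alpha> > 1" and R: "0 < R" "R < 1"
  shows "ennreal (pi * C_alpha \<alpha> R * cmod (H 0))
           \<le> (\<integral>\<^sup>+v\<in>ball 0 R. cmod (H v) * (1 - (cmod v)\<^sup>2) powr (\<alpha> - 2) \<partial>lborel)"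
proof -
  define E where "E w = exp (2 * of_real pi * \<i> * w)" for w
  define f where "f v = indicator (ball 0 R) v * (cmod (H v) * (1 - (cmod v)\<^sup>2) powr (\<alpha> - 2))" for v
  have cont: "continuous_on (ball 0 R) (\<lambda>v. cmod (H v) * (1 - (cmod v)\<^sup>2) powr (\<alpha> - 2))"
    using R by (intro continuous_on_weighted_norm holomorphic_on_imp_continuous_on
        holomorphic_on_subset[OF H]) auto
  have f_meas: "f \<in> borel_measurable borel"
    using borel_measurable_continuous_on_indicator[OF _ cont] by (simp add: f_def[abs_def])
  have pullback: "f (E w) * (cmod (deriv E w))\<^sup>2
      = 4 * pi\<^sup>2 * (exp (-4 * pi * Im w) * (1 - exp (-4 * pi * Im w)) powr (\<alpha> - 2)) * cmod (H (E w))"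
    if "w \<in> exp_strip R" for w
  proof -
    have "(cmod (E w))\<^sup>2 = exp (-4 * pi * Im w)"
      by (simp add: E_def flip: exp_of_nat_mult)
    moreover have "cmod (deriv E w) = 2 * pi * cmod (E w)"
      by (simp add: E_def[abs_def] deriv_exp_2pi_i norm_mult)
    ultimately show ?thesis
      using norm_exp_2pi_i_exp_strip[OF R(1) that] by (simp add: f_def E_def power_mult_distrib)
  qed
  have "ennreal (pi * C_alpha \<alpha> R * cmod (H 0))
      \<le> (\<integral>\<^sup>+w\<in>exp_strip R. 4 * pi\<^sup>2 * (exp (-4 * pi * Im w) * (1 - exp (-4 * pi * Im w)) powr (\<alpha> - 2))
            * cmod (H (E w)) \<partial>lborel)"
    unfolding E_def by (rule norm_le_nn_integral_exp_strip[OF H \<alpha> R])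
  also have "\<dots> = (\<integral>\<^sup>+w\<in>exp_strip R. f (E w) * (cmod (deriv E w))\<^sup>2 \<partial>lborel)"
    by (intro nn_integral_cong) (simp add: pullback indicator_def)
  also have "\<dots> \<le> (\<integral>\<^sup>+u\<in>E ` exp_strip R. f u \<partial>lborel)"
  proof (rule nn_integral_holomorphic_change_of_variables_le[OF open_exp_strip])
    show "E holomorphic_on exp_strip R"
      unfolding E_def[abs_def] by (intro holomorphic_intros)
    show "inj_on E (exp_strip R)"
      unfolding E_def[abs_def] by (rule inj_on_exp_2pi_i_exp_strip)
  qed (fact f_meas | simp add: f_def)+
  also have "\<dots> \<le> (\<integral>\<^sup>+u. f u \<partial>lborel)"
    by (intro nn_integral_mono) (simp add: indicator_def)
  also have "\<dots> = (\<integral>\<^sup>+v\<in>ball 0 R. cmod (H v) * (1 - (cmod v)\<^sup>2) powr (\<alpha> - 2) \<partial>lborel)"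
    by (intro nn_integral_cong) (simp add: f_def indicator_def)
  finally show ?thesis .
qed

section \<open>The pointwise estimate\<close>

text \<open>\<open>exp (-2\<alpha> Ln (1 - cnj z v))\<close> is the principal branch of \<open>(1 - cnj z v)\<^bsup>-2\<alpha>\<^esup>\<close>, holomorphic
  on the disc since \<open>Re (1 - cnj z v) > 0\<close> there.\<close>

definition disc_pullback :: "real \<Rightarrow> complex \<Rightarrow> (complex \<Rightarrow> complex) \<Rightarrow> complex \<Rightarrow> complex" where
  "disc_pullback \<alpha> z F v = F (disc_involution z v) * exp (- (2 * of_real \<alpha>) * Ln (1 - cnj z * v))"

lemma disc_pullback_0: "disc_pullback \<alpha> z F 0 = F z"
  by (simp add: disc_pullback_def disc_involution_def)

lemma holomorphic_on_disc_pullback: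
  assumes F: "F holomorphic_on ball 0 1" and z: "cmod z < 1"
  shows "disc_pullback \<alpha> z F holomorphic_on ball 0 1"
proof -
  have "disc_involution z ` ball 0 1 \<subseteq> ball 0 1"
    using norm_disc_involution_lt_1[OF z] by auto
  then have "(\<lambda>v. F (disc_involution z v)) holomorphic_on ball 0 1"
    using holomorphic_on_compose_gen[OF holomorphic_on_disc_involution[OF z] F] by (simp add: o_def)
  moreover have "1 - cnj z * v \<notin> \<real>\<^sub>\<le>\<^sub>0" if "v \<in> ball 0 1" for v
  proof -
    have "0 < Re (1 - cnj z * v)"
      using that by (intro Re_one_minus_cnj_mult_pos[OF z]) simp
    then show ?thesis
      by (simp only: complex_nonpos_Reals_iff not_le) simp
  qed
  ultimately show ?thesis
    unfolding disc_pullback_def[abs_def] by (intro holomorphic_intros holomorphic_on_Ln') auto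
qed

lemma norm_disc_pullback:
  assumes "cmod z < 1" "cmod v < 1"
  shows "cmod (disc_pullback \<alpha> z F v) = cmod (F (disc_involution z v)) / cmod (1 - cnj z * v) powr (2 * \<alpha>)"
  using one_minus_cnj_mult_nonzero[OF assms]
  by (simp add: disc_pullback_def norm_mult powr_def divide_inverse flip: exp_minus)

lemma weighted_norm_disc_pullback:
  assumes z: "cmod z < 1" and v: "cmod v < 1"
  shows "cmod (F (disc_involution z v)) * (1 - (cmod (disc_involution z v))\<^sup>2) powr (\<alpha> - 2)
           * (cmod (deriv (disc_involution z) v))\<^sup>2
         = (1 - (cmod z)\<^sup>2) powr \<alpha> * (cmod (disc_pullback \<alpha> z F v) * (1 - (cmod v)\<^sup>2) powr (\<alpha> - 2))"
  using disc_involution_weight[OF z v, of \<alpha>] by (simp add: norm_disc_pullback[OF z v] mult_ac)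

lemma norm_weighted_le_nn_integral_phball:
  fixes F :: "complex \<Rightarrow> complex"
  assumes F: "F holomorphic_on ball 0 1" and z: "z \<in> ball 0 1"
    and \<alpha>: "\<alpha> > 1" and R: "0 < R" "R < 1"
  shows "ennreal (pi * C_alpha \<alpha> R * ((1 - (cmod z)\<^sup>2) powr \<alpha> * cmod (F z)))
           \<le> (\<integral>\<^sup>+u\<in>phball z R. cmod (F u) * (1 - (cmod u)\<^sup>2) powr (\<alpha> - 2) \<partial>lborel)"
proof -
  define \<phi> where "\<phi> = disc_involution z"
  define H where "H = disc_pullback \<alpha> z F"
  define f where "f u = indicator (ball 0 1) u * (cmod (F u) * (1 - (cmod u)\<^sup>2) powr (\<alpha> - 2))" for u
  define A where "A = (1 - (cmod z)\<^sup>2) powr \<alpha>"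
  have z1: "cmod z < 1"
    using z by simp
  have H: "H holomorphic_on ball 0 1"
    unfolding H_def using F z1 by (rule holomorphic_on_disc_pullback)
  have "continuous_on (ball 0 R) (\<lambda>v. cmod (H v) * (1 - (cmod v)\<^sup>2) powr (\<alpha> - 2))"
    using R by (intro continuous_on_weighted_norm holomorphic_on_imp_continuous_on
        holomorphic_on_subset[OF H]) auto
  then have H_meas: "(\<lambda>v. ennreal (cmod (H v) * (1 - (cmod v)\<^sup>2) powr (\<alpha> - 2)) * indicator (ball 0 R) v)
      \<in> borel_measurable borel"
    by (intro borel_measurable_continuous_on_open_indicator) auto
  have F_cont: "continuous_on (ball 0 1) (\<lambda>v. cmod (F v) * (1 - (cmod v)\<^sup>2) powr (\<alpha> - 2))"
    by (intro continuous_on_weighted_norm holomorphic_on_imp_continuous_on F) auto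
  have f_meas: "f \<in> borel_measurable borel"
    using borel_measurable_continuous_on_indicator[OF _ F_cont] by (simp add: f_def[abs_def])
  have weight: "f (\<phi> v) * (cmod (deriv \<phi> v))\<^sup>2 = A * (cmod (H v) * (1 - (cmod v)\<^sup>2) powr (\<alpha> - 2))"
    if "v \<in> ball 0 1" for v
    using that norm_disc_involution_lt_1[OF z1, of v] weighted_norm_disc_pullback[OF z1, of v F \<alpha>]
    by (simp add: f_def A_def H_def \<phi>_def)
  have "ennreal (pi * C_alpha \<alpha> R * (A * cmod (F z))) = ennreal (A * (pi * C_alpha \<alpha> R * cmod (H 0)))"
    by (simp add: H_def disc_pullback_0 mult_ac)
  also have "\<dots> = ennreal A * ennreal (pi * C_alpha \<alpha> R * cmod (H 0))"
    by (rule ennreal_mult') (simp add: A_def)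
  also have "\<dots> \<le> ennreal A * (\<integral>\<^sup>+v\<in>ball 0 R. cmod (H v) * (1 - (cmod v)\<^sup>2) powr (\<alpha> - 2) \<partial>lborel)"
    by (intro mult_left_mono norm_le_weighted_integral_ball[OF H \<alpha> R]) simp
  also have "\<dots> = (\<integral>\<^sup>+v. ennreal A * (ennreal (cmod (H v) * (1 - (cmod v)\<^sup>2) powr (\<alpha> - 2))
      * indicator (ball 0 R) v) \<partial>lborel)"
    using H_meas by (intro nn_integral_cmult[symmetric]) simp
  also have "\<dots> = (\<integral>\<^sup>+v\<in>ball 0 R. f (\<phi> v) * (cmod (deriv \<phi> v))\<^sup>2 \<partial>lborel)"
    using R by (intro nn_integral_cong) (simp add: weight A_def ennreal_mult' indicator_def)
  also have "\<dots> \<le> (\<integral>\<^sup>+u\<in>\<phi> ` ball 0 R. f u \<partial>lborel)"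
  proof (rule nn_integral_holomorphic_change_of_variables_le)
    show "\<phi> holomorphic_on ball 0 R" "inj_on \<phi> (ball 0 R)"
      using R holomorphic_on_disc_involution[OF z1] inj_on_disc_involution[OF z1]
      by (auto simp: \<phi>_def intro: inj_on_subset)
  qed (fact f_meas | simp add: f_def)+
  also have "\<dots> \<le> (\<integral>\<^sup>+u\<in>phball z R. cmod (F u) * (1 - (cmod u)\<^sup>2) powr (\<alpha> - 2) \<partial>lborel)"
    using R disc_involution_ball_subset_phball[OF z1, of R]
    by (intro nn_integral_mono) (auto simp: f_def \<phi>_def indicator_def phball_def)
  finally show ?thesis
    by (simp add: A_def)
qed

section \<open>Integrating the pointwise estimate\<close>

lemma borel_measurable_cnj [measurable]: "cnj \<in> borel_measurable borel"
  by (intro borel_measurable_continuous_onI continuous_intros)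

lemma sets_phball [measurable]: "phball z R \<in> sets borel"
  unfolding phball_def pseudohyp_def by measurable

lemma borel_measurable_pseudohyp_pairs [measurable]:
  "(\<lambda>p. pseudohyp (snd p) (fst p)) \<in> borel_measurable (lborel \<Otimes>\<^sub>M lborel)"
  unfolding pseudohyp_def by measurable

lemma nn_integral_le_local_average_bound:
  fixes f h :: "complex \<Rightarrow> ennreal"
  assumes [measurable]: "f \<in> borel_measurable borel" "h \<in> borel_measurable borel" "\<Omega> \<in> sets borel"
    and \<Omega>: "\<Omega> \<subseteq> ball 0 1" and f_outside: "\<And>u. u \<notin> ball 0 1 \<Longrightarrow> f u = 0"
    and bound: "\<And>z. z \<in> \<Omega> \<Longrightarrow> f z \<le> c * h z * (\<integral>\<^sup>+u\<in>phball z R. f u \<partial>lborel)"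
  shows "(\<integral>\<^sup>+z\<in>\<Omega>. f z \<partial>lborel)
           \<le> c * (SUP u\<in>ball 0 1. \<integral>\<^sup>+z\<in>\<Omega> \<inter> phball u R. h z \<partial>lborel) * (\<integral>\<^sup>+u. f u \<partial>lborel)"
proof -
  define \<rho> where "\<rho> = (SUP u\<in>ball 0 1. \<integral>\<^sup>+z\<in>\<Omega> \<inter> phball u R. h z \<partial>lborel)"
  \<comment> \<open>\<open>u \<in> phball z R\<close> without the condition \<open>u \<in> ball 0 1\<close>, which \<open>f u\<close> enforces\<close>
  define k where "k z u = c * h z * indicator \<Omega> z * (f u * indicator {p. pseudohyp (snd p) (fst p) < R} (z, u))"
    for z u
  have [measurable]: "case_prod k \<in> borel_measurable (lborel \<Otimes>\<^sub>M lborel)"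
    unfolding k_def by measurable
  have outer: "f z * indicator \<Omega> z \<le> (\<integral>\<^sup>+u. k z u \<partial>lborel)" for z
  proof (cases "z \<in> \<Omega>")
    case True
    then have "f z * indicator \<Omega> z \<le> c * h z * (\<integral>\<^sup>+u\<in>phball z R. f u \<partial>lborel)"
      using bound by simp
    also have "\<dots> = (\<integral>\<^sup>+u. c * h z * (f u * indicator (phball z R) u) \<partial>lborel)"
      by (rule nn_integral_cmult[symmetric]) measurable
    also have "\<dots> = (\<integral>\<^sup>+u. k z u \<partial>lborel)"
      using True by (intro nn_integral_cong) (auto simp: k_def indicator_def phball_def f_outside)
    finally show ?thesis .
  qed simp
  have inner: "(\<integral>\<^sup>+z. k z u \<partial>lborel) \<le> c * \<rho> * f u" for u
  proof (cases "u \<in> ball 0 1")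
    case True
    have "indicator \<Omega> z * indicator {p. pseudohyp (snd p) (fst p) < R} (z, u)
        = (indicator (\<Omega> \<inter> phball u R) z :: ennreal)" for z
      using True \<Omega> by (auto simp: indicator_def phball_def pseudohyp_commute[of u])
    then have "(\<integral>\<^sup>+z. k z u \<partial>lborel) = c * f u * (\<integral>\<^sup>+z\<in>\<Omega> \<inter> phball u R. h z \<partial>lborel)"
      by (subst nn_integral_cmult[symmetric]) (auto simp: k_def mult_ac intro!: nn_integral_cong)
    also have "\<dots> \<le> c * f u * \<rho>"
      unfolding \<rho>_def using True by (intro mult_left_mono SUP_upper) auto
    finally show ?thesis
      by (simp add: mult_ac)
  qed (simp add: k_def f_outside)
  have "(\<integral>\<^sup>+z\<in>\<Omega>. f z \<partial>lborel) \<le> (\<integral>\<^sup>+z. (\<integral>\<^sup>+u. k z u \<partial>lborel) \<partial>lborel)"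
    by (intro nn_integral_mono outer)
  also have "\<dots> = (\<integral>\<^sup>+u. (\<integral>\<^sup>+z. k z u \<partial>lborel) \<partial>lborel)"
    by (rule lborel_pair.Fubini') measurable
  also have "\<dots> \<le> (\<integral>\<^sup>+u. c * \<rho> * f u \<partial>lborel)"
    by (intro nn_integral_mono inner)
  also have "\<dots> = c * \<rho> * (\<integral>\<^sup>+u. f u \<partial>lborel)"
    by (rule nn_integral_cmult) measurable
  finally show ?thesis
    by (simp add: \<rho>_def)
qed

lemma C_alpha_pos:
  assumes "\<alpha> > 1" "0 < R" "R < 1"
  shows "C_alpha \<alpha> R > 0"
proof -
  have "(1 - R\<^sup>2) powr (\<alpha> - 1) < 1 powr (\<alpha> - 1)"
    using assms by (intro powr_less_mono2) (auto intro: power_le_one)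
  then show ?thesis
    using assms by (simp add: C_alpha_def)
qed

lemma weighted_norm_le_local_average:
  fixes F :: "complex \<Rightarrow> complex"
  assumes F: "F holomorphic_on ball 0 1" and z: "z \<in> ball 0 1"
    and \<alpha>: "\<alpha> > 1" and R: "0 < R" "R < 1"
  shows "ennreal (cmod (F z) * (1 - (cmod z)\<^sup>2) powr (\<alpha> - 2))
           \<le> ennreal (1 / (pi * C_alpha \<alpha> R)) * ennreal ((1 - (cmod z)\<^sup>2) powr (-2))
             * (\<integral>\<^sup>+u\<in>phball z R. cmod (F u) * (1 - (cmod u)\<^sup>2) powr (\<alpha> - 2) \<partial>lborel)"
proof -
  define C where "C = C_alpha \<alpha> R"
  define P where "P = pi * C * ((1 - (cmod z)\<^sup>2) powr \<alpha> * cmod (F z))"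
  have "C > 0"
    unfolding C_def using \<alpha> R by (rule C_alpha_pos)
  then have eq: "cmod (F z) * (1 - (cmod z)\<^sup>2) powr (\<alpha> - 2) = 1 / (pi * C) * (1 - (cmod z)\<^sup>2) powr (-2) * P"
    by (simp add: P_def powr_diff powr_minus field_simps)
  have ennreal_mult3: "ennreal (a * b * p) = ennreal a * ennreal b * ennreal p" if "0 \<le> a" "0 \<le> b" for a b p
    using that by (simp add: ennreal_mult')
  have "ennreal (cmod (F z) * (1 - (cmod z)\<^sup>2) powr (\<alpha> - 2))
      = ennreal (1 / (pi * C)) * ennreal ((1 - (cmod z)\<^sup>2) powr (-2)) * ennreal P"
    unfolding eq using \<open>C > 0\<close> by (intro ennreal_mult3) simp_all
  also have "\<dots> \<le> ennreal (1 / (pi * C)) * ennreal ((1 - (cmod z)\<^sup>2) powr (-2))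
      * (\<integral>\<^sup>+u\<in>phball z R. cmod (F u) * (1 - (cmod u)\<^sup>2) powr (\<alpha> - 2) \<partial>lborel)"
    unfolding P_def C_def by (intro mult_left_mono norm_weighted_le_nn_integral_phball[OF F z \<alpha> R]) simp
  finally show ?thesis
    by (simp add: C_def)
qed

lemma lebesgue_set_ae_eq_borel:
  assumes "A \<in> sets lebesgue"
  obtains B where "B \<in> sets borel" "B \<subseteq> A" "AE x in lborel. x \<in> B \<longleftrightarrow> x \<in> A"
proof -
  obtain B N where B: "B \<in> sets borel" "negligible N" "B \<union> N = A"
    using sets_lebesgue_almost_borel[OF assms] by blast
  have "AE x in lebesgue. x \<notin> N"
    using B(2) by (intro AE_not_in) (simp add: negligible_iff_null_sets)
  then have "AE x in lborel. x \<notin> N"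
    by (simp add: AE_completion_iff)
  then have "AE x in lborel. x \<in> B \<longleftrightarrow> x \<in> A"
    by (rule eventually_mono) (use B(3) in blast)
  moreover have "B \<subseteq> A"
    using B(3) by blast
  ultimately show ?thesis
    using that B(1) by blast
qed

lemma bergman_norm_1_eq:
  "bergman_norm_p 1 \<alpha> G
     = ennreal (1 / pi) * (\<integral>\<^sup>+z\<in>ball 0 1. cmod (G z) * (1 - (cmod z)\<^sup>2) powr (\<alpha> - 2) \<partial>lborel)"
  by (simp add: bergman_norm_p_def nn_integral_completion)

lemma rho_D_cong_AE:
  assumes "AE x in lborel. x \<in> B \<longleftrightarrow> x \<in> \<Omega>"
  shows "rho_D \<Omega> R = (SUP u\<in>ball 0 1. \<integral>\<^sup>+z\<in>B \<inter> phball u R. (1 - (cmod z)\<^sup>2) powr (-2) \<partial>lborel)"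
proof -
  have "hyp_measure (\<Omega> \<inter> phball u R) = (\<integral>\<^sup>+z\<in>B \<inter> phball u R. (1 - (cmod z)\<^sup>2) powr (-2) \<partial>lborel)" for u
    unfolding hyp_measure_def nn_integral_completion
    using assms by (intro nn_integral_cong_AE, eventually_elim) (auto simp: indicator_def)
  then show ?thesis
    by (simp add: rho_D_def)
qed

lemma nn_integral_weighted_norm_le_local_average:
  fixes F :: "complex \<Rightarrow> complex"
  assumes F: "F holomorphic_on ball 0 1" and B: "B \<in> sets borel" "B \<subseteq> ball 0 1"
    and \<alpha>: "\<alpha> > 1" and R: "0 < R" "R < 1"
  shows "(\<integral>\<^sup>+z\<in>B. cmod (F z) * (1 - (cmod z)\<^sup>2) powr (\<alpha> - 2) \<partial>lborel)
           \<le> ennreal (1 / (pi * C_alpha \<alpha> R))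
             * (SUP u\<in>ball 0 1. \<integral>\<^sup>+z\<in>B \<inter> phball u R. (1 - (cmod z)\<^sup>2) powr (-2) \<partial>lborel)
             * (\<integral>\<^sup>+z\<in>ball 0 1. cmod (F z) * (1 - (cmod z)\<^sup>2) powr (\<alpha> - 2) \<partial>lborel)"
proof -
  define w where "w u = ennreal (cmod (F u) * (1 - (cmod u)\<^sup>2) powr (\<alpha> - 2)) * indicator (ball 0 1) u" for u
  have w_meas: "w \<in> borel_measurable borel"
    unfolding w_def[abs_def]
    by (intro borel_measurable_continuous_on_open_indicator continuous_on_weighted_norm
        holomorphic_on_imp_continuous_on F) auto
  have w_restrict: "(\<integral>\<^sup>+u\<in>S. w u \<partial>lborel)
      = (\<integral>\<^sup>+u\<in>S. cmod (F u) * (1 - (cmod u)\<^sup>2) powr (\<alpha> - 2) \<partial>lborel)" if "S \<subseteq> ball 0 1" for S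
    using that by (intro nn_integral_cong) (auto simp: w_def indicator_def)
  have "(\<integral>\<^sup>+z\<in>B. w z \<partial>lborel)
      \<le> ennreal (1 / (pi * C_alpha \<alpha> R))
        * (SUP u\<in>ball 0 1. \<integral>\<^sup>+z\<in>B \<inter> phball u R. (1 - (cmod z)\<^sup>2) powr (-2) \<partial>lborel)
        * (\<integral>\<^sup>+u. w u \<partial>lborel)"
  proof (rule nn_integral_le_local_average_bound[OF w_meas _ B])
    fix z assume "z \<in> B"
    then have z: "z \<in> ball 0 1"
      using B(2) by auto
    have "(\<integral>\<^sup>+u\<in>phball z R. w u \<partial>lborel)
        = (\<integral>\<^sup>+u\<in>phball z R. cmod (F u) * (1 - (cmod u)\<^sup>2) powr (\<alpha> - 2) \<partial>lborel)"
      by (rule w_restrict) (auto simp: phball_def)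
    then show "w z \<le> ennreal (1 / (pi * C_alpha \<alpha> R)) * ennreal ((1 - (cmod z)\<^sup>2) powr (-2))
        * (\<integral>\<^sup>+u\<in>phball z R. w u \<partial>lborel)"
      using weighted_norm_le_local_average[OF F z \<alpha> R] z by (simp add: w_def)
  qed (auto simp: w_def)
  also have "(\<integral>\<^sup>+u. w u \<partial>lborel)
      = (\<integral>\<^sup>+u\<in>ball 0 1. cmod (F u) * (1 - (cmod u)\<^sup>2) powr (\<alpha> - 2) \<partial>lborel)"
    by (simp add: w_def)
  finally show ?thesis
    using w_restrict[OF B(2)] by simp
qed

theorem theorem2:
  fixes \<alpha> R :: real and \<Omega> :: "complex set" and F :: "complex \<Rightarrow> complex"
  assumes "\<alpha> > 1"
    and "\<Omega> \<in> sets lebesgue" and "\<Omega> \<subseteq> ball 0 1"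
    and "F \<in> bergman_space 1 \<alpha>"
    and "0 < R" and "R < 1"
  shows "bergman_norm_p 1 \<alpha> (\<lambda>z. F z * indicator \<Omega> z)
           \<le> ennreal (2 / C_alpha \<alpha> R) * rho_D \<Omega> R * bergman_norm_p 1 \<alpha> F"
proof -
  note \<alpha> = \<open>\<alpha> > 1\<close> and R = \<open>0 < R\<close> \<open>R < 1\<close>
  have F: "F holomorphic_on ball 0 1"
    using assms(4) by (simp add: bergman_space_def)
  obtain B where B: "B \<in> sets borel" "B \<subseteq> \<Omega>" and ae: "AE x in lborel. x \<in> B \<longleftrightarrow> x \<in> \<Omega>"
    by (rule lebesgue_set_ae_eq_borel[OF assms(2)])
  define I where "I S = (\<integral>\<^sup>+z\<in>S. cmod (F z) * (1 - (cmod z)\<^sup>2) powr (\<alpha> - 2) \<partial>lborel)" for S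
  have "bergman_norm_p 1 \<alpha> (\<lambda>z. F z * indicator \<Omega> z) = ennreal (1 / pi) * I B"
    unfolding bergman_norm_1_eq I_def using ae
    by (intro arg_cong2[where f = "(*)"] refl nn_integral_cong_AE, eventually_elim)
      (use assms(3) in \<open>auto simp: indicator_def\<close>)
  also have "\<dots> \<le> ennreal (1 / pi) * (ennreal (1 / (pi * C_alpha \<alpha> R)) * rho_D \<Omega> R * I (ball 0 1))"
    using B assms(3) unfolding rho_D_cong_AE[OF ae] I_def
    by (intro mult_left_mono nn_integral_weighted_norm_le_local_average[OF F _ _ \<alpha> R]) auto
  also have "\<dots> \<le> ennreal (1 / pi) * (ennreal (2 / C_alpha \<alpha> R) * rho_D \<Omega> R * I (ball 0 1))"
    using C_alpha_pos[OF \<alpha> R] pi_gt3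
    by (intro mult_left_mono mult_right_mono ennreal_leI) (simp_all add: field_simps)
  also have "\<dots> = ennreal (2 / C_alpha \<alpha> R) * rho_D \<Omega> R * bergman_norm_p 1 \<alpha> F"
    by (simp add: bergman_norm_1_eq I_def mult_ac)
  finally show ?thesis .
qed

end
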